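(* In the real projective plane, let $g_1,g_2$ be distinct lines and $C_1,C_2$ distinct points, and suppose the coordinate system is such that $g_1$ and $g_2$ meet on the line at infinity (they are parallel lines in the affine plane), $C_2$ lies on the line at infinity, and $C_1$ is an affine point. Suppose that the distances from $C_1$ to $g_1$ and to $g_2$ are not equal. Then the polygonal lines inscribed in $g_1\cup g_2$ and circumscribed about the singular dual conic given by $C_1,C_2$ satisfy: (i) the only finite such polygonal line consists of a single segment, determined by the intersection points of $g_1$ and $g_2$ with the line $C_1C_2$; (ii) all other such polygonal lines are not closed; moreover, their sides approach the line $C_1C_2$ in one direction and diverge to infinity in the other direction.
   Context: The singular dual conic given by $C_1,C_2$ is the union of the pencils of lines through $C_1$ and through $C_2$ (lines through $C_2$ are lines parallel to a fixed direction). A polygonal line is inscribed in $g_1\cup g_2$ and circumscribed about this dual conic if its vertices lie alternately on $g_1$ and $g_2$ and its side lines pass alternately through $C_1$ and $C_2$; it is closed if its vertex sequence is periodic. *)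

theory Defs
  imports "HOL-Analysis.Analysis"
begin

text \<open>Affine model of the real projective plane: points are vectors in real^2.
  The point C1 is an affine point c; the point C2 at infinity is given by a
  nonzero direction vector d (lines through C2 = lines parallel to d).\<close>

definition int_interval :: "int set \<Rightarrow> bool" where
  "int_interval I \<longleftrightarrow> I \<noteq> {} \<and> (\<forall>i\<in>I. \<forall>k\<in>I. \<forall>j. i \<le> j \<and> j \<le> k \<longrightarrow> j \<in> I)"

text \<open>A polygonal line inscribed in g1 \<union> g2 and circumscribed about the singular
  dual conic {C1, C2}: vertices v i (i in an integer interval I) lie alternately
  on g1 and g2, side lines pass alternately through C1 and C2, and consecutive
  side lines are distinct (no backtracking).\<close>

definition polyline ::
  "(real^2) set \<Rightarrow> (real^2) set \<Rightarrow> real^2 \<Rightarrow> real^2 \<Rightarrow> int set \<Rightarrow> (int \<Rightarrow> real^2) \<Rightarrow> bool" where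
  "polyline g1 g2 c d I v \<longleftrightarrow>
     int_interval I \<and>
     (\<exists>s t :: int.
        (\<forall>i\<in>I. v i \<in> (if even (i + t) then g1 else g2)) \<and>
        (\<forall>i. i \<in> I \<and> i + 1 \<in> I \<longrightarrow>
              (if even (i + s) then collinear {c, v i, v (i + 1)}
               else (\<exists>r. v (i + 1) - v i = r *\<^sub>R d)))) \<and>
     (\<forall>i. i \<in> I \<and> i + 2 \<in> I \<longrightarrow> v (i + 2) \<noteq> v i)"

definition max_polyline ::
  "(real^2) set \<Rightarrow> (real^2) set \<Rightarrow> real^2 \<Rightarrow> real^2 \<Rightarrow> int set \<Rightarrow> (int \<Rightarrow> real^2) \<Rightarrow> bool" where
  "max_polyline g1 g2 c d I v \<longleftrightarrow>
     polyline g1 g2 c d I v \<and>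
     \<not> (\<exists>J w. polyline g1 g2 c d J w \<and> I \<subset> J \<and> (\<forall>i\<in>I. w i = v i))"

end

theory Submission
  imports
    Defs
    "HOL-Probability.Characteristic_Functions" (* for limseq_even_odd *)
begin

text \<open>
  Write every point as x = c + height x \<cdot> d + offset x with offset x parallel to g1 and g2.
  The lines g1, g2 are the level sets of height at two levels A1, A2, which are nonzero because
  C1 lies on neither line and satisfy |A1| \<noteq> |A2| because the distances of C1 to the lines
  differ; the line C1C2 is where the offset vanishes. A side parallel to d keeps the offset,
  and a side through C1 from g_i to g_j scales it by A_j / A_i, so every two consecutive sides
  scale it by q = A2 / A1 or by 1 / q, with |q| \<noteq> 1.

  Consequently a polyline with three vertices has no vertex on C1C2 (otherwise q = 1 or it
  would backtrack), while a polyline whose end vertex is off C1C2 can always be continued.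
  So a finite maximal polyline is the single segment joining g1 \<inter> C1C2 and g2 \<inter> C1C2, and
  every other maximal polyline is infinite in both directions with offsets forming a two-sided
  geometric progression of ratio |q| \<noteq> 1: they tend to 0 on one side and to infinity on the
  other, so the polyline approaches C1C2 on one side, escapes to infinity on the other, and
  never closes up.
\<close>

section \<open>Integer intervals\<close>

lemma int_interval_betweenD:
  "int_interval I \<Longrightarrow> i \<in> I \<Longrightarrow> k \<in> I \<Longrightarrow> i \<le> j \<Longrightarrow> j \<le> k \<Longrightarrow> j \<in> I"
  unfolding int_interval_def by blast

lemma int_interval_le_last:
  assumes "int_interval I" "hi \<in> I" "hi + 1 \<notin> I" "j \<in> I"
  shows "j \<le> hi"
  using int_interval_betweenD[OF assms(1,2,4), of "hi + 1"] assms(3) by linarith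

lemma int_interval_insert_succ:
  assumes "int_interval I" "hi \<in> I" "hi + 1 \<notin> I"
  shows "int_interval (insert (hi + 1) I)"
  unfolding int_interval_def
proof (intro conjI ballI allI impI)
  fix i k j
  assume i: "i \<in> insert (hi + 1) I" and k: "k \<in> insert (hi + 1) I" and "i \<le> j \<and> j \<le> k"
  show "j \<in> insert (hi + 1) I"
  proof (cases "j = hi + 1")
    case False
    have "k \<le> hi + 1"
      using k int_interval_le_last[OF assms, of k] by auto
    then have "j \<le> hi"
      using False \<open>i \<le> j \<and> j \<le> k\<close> by simp
    then have "i \<in> I"
      using i \<open>i \<le> j \<and> j \<le> k\<close> by auto
    then show ?thesis
      using int_interval_betweenD[OF assms(1) _ assms(2)] \<open>i \<le> j \<and> j \<le> k\<close> \<open>j \<le> hi\<close> by simp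
  qed simp
qed simp

lemma int_interval_reflect:
  assumes "int_interval I"
  shows "int_interval (uminus -` I)"
  unfolding int_interval_def
proof (intro conjI ballI allI impI)
  obtain i where "i \<in> I"
    using assms unfolding int_interval_def by blast
  then have "- i \<in> uminus -` I"
    by simp
  then show "uminus -` I \<noteq> {}"
    by blast
next
  fix i k j assume "i \<in> uminus -` I" "k \<in> uminus -` I" "i \<le> j \<and> j \<le> k"
  then show "j \<in> uminus -` I"
    using int_interval_betweenD[OF assms, of "- k" "- i" "- j"] by simp
qed

section \<open>Two-sided geometric progressions\<close>

lemma two_step_geometric_power:
  fixes f :: "int \<Rightarrow> real"
  assumes "\<And>i. f (i + 2) = q * f i"
  shows "f (i + 2 * int m) = q ^ m * f i"
proof (induction m)
  case (Suc m)
  have "f (i + 2 * int (Suc m)) = f ((i + 2 * int m) + 2)"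
    by (simp add: algebra_simps)
  then show ?case
    using Suc assms by simp
qed simp

lemma two_step_geometric_tendsto_0:
  fixes f :: "int \<Rightarrow> real"
  assumes "\<And>i. f (i + 2) = q * f i" and "\<bar>q\<bar> < 1"
  shows "(\<lambda>n. f (int n)) \<longlonglongrightarrow> 0"
proof (rule limseq_even_odd)
  have "(\<lambda>n. q ^ n * f r) \<longlonglongrightarrow> 0" for r
    using assms(2) by (intro tendsto_mult_left_zero LIMSEQ_power_zero) simp
  moreover have "f (int (2 * n)) = q ^ n * f 0" "f (int (2 * n + 1)) = q ^ n * f 1" for n
    using two_step_geometric_power[of f q, OF assms(1), of 0 n]
      two_step_geometric_power[of f q, OF assms(1), of 1 n]
    by (simp_all add: add.commute)
  ultimately show "(\<lambda>n. f (int (2 * n))) \<longlonglongrightarrow> 0" "(\<lambda>n. f (int (2 * n + 1))) \<longlonglongrightarrow> 0"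
    by simp_all
qed

lemma two_step_geometric_contracting:
  fixes f :: "int \<Rightarrow> real"
  assumes pos: "\<And>i. f i > 0" and step: "\<And>i. f (i + 2) = q * f i" and "0 < q" "q < 1"
  shows "(\<lambda>n. f (int n)) \<longlonglongrightarrow> 0" and "filterlim (\<lambda>n. f (- int n)) at_top sequentially"
proof -
  show "(\<lambda>n. f (int n)) \<longlonglongrightarrow> 0"
    using two_step_geometric_tendsto_0[of f q, OF step] \<open>0 < q\<close> \<open>q < 1\<close> by simp
  have "inverse (f (- (i + 2))) = q * inverse (f (- i))" for i
    using step[of "- (i + 2)"] pos[of "- (i + 2)"] \<open>0 < q\<close> by (simp add: field_simps)
  then have "(\<lambda>n. inverse (f (- int n))) \<longlonglongrightarrow> 0"
    using two_step_geometric_tendsto_0[of "\<lambda>i. inverse (f (- i))" q] \<open>0 < q\<close> \<open>q < 1\<close> by simp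
  then have "filterlim (\<lambda>n. inverse (inverse (f (- int n)))) at_top sequentially"
    using pos by (intro filterlim_inverse_at_top) simp_all
  then show "filterlim (\<lambda>n. f (- int n)) at_top sequentially"
    by simp
qed

lemma two_step_geometric_dichotomy:
  fixes f :: "int \<Rightarrow> real"
  assumes pos: "\<And>i. f i > 0" and step: "\<And>i. f (i + 2) = q * f i" and "q \<noteq> 1"
  shows "((\<lambda>n. f (int n)) \<longlonglongrightarrow> 0 \<and> filterlim (\<lambda>n. f (- int n)) at_top sequentially) \<or>
         ((\<lambda>n. f (- int n)) \<longlonglongrightarrow> 0 \<and> filterlim (\<lambda>n. f (int n)) at_top sequentially)"
proof -
  have "q > 0"
    using step[of 0] pos[of 0] pos[of 2] by (simp add: zero_less_mult_iff)
  show ?thesis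
  proof (cases "q < 1")
    case True
    then show ?thesis
      using two_step_geometric_contracting[of f q, OF pos step \<open>q > 0\<close>] by blast
  next
    case False
    then have "0 < inverse q" "inverse q < 1"
      using \<open>q > 0\<close> \<open>q \<noteq> 1\<close> by (simp_all add: inverse_less_1_iff)
    moreover have "f (- (i + 2)) = inverse q * f (- i)" for i
      using step[of "- (i + 2)"] \<open>q > 0\<close> by simp
    ultimately have "(\<lambda>n. f (- int n)) \<longlonglongrightarrow> 0"
      and "filterlim (\<lambda>n. f (- (- int n))) at_top sequentially"
      using two_step_geometric_contracting[of "\<lambda>i. f (- i)" "inverse q", OF pos] by blast+
    then show ?thesis
      by simp
  qed
qed

lemma two_step_geometric_not_periodic:
  fixes f :: "int \<Rightarrow> real"
  assumes pos: "\<And>i. f i > 0" and step: "\<And>i. f (i + 2) = q * f i" and "q \<noteq> 1"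
  shows "\<not> (\<exists>p>0. \<forall>i. f (i + p) = f i)"
proof
  assume "\<exists>p>0. \<forall>i. f (i + p) = f i"
  then obtain p where "p > 0" and period: "\<And>i. f (i + p) = f i" by blast
  have "q > 0"
    using step[of 0] pos[of 0] pos[of 2] by (simp add: zero_less_mult_iff)
  have "0 + 2 * int (nat p) = (0 + p) + p"
    using \<open>p > 0\<close> by simp
  then have "f (0 + 2 * int (nat p)) = f 0"
    by (simp only: period)
  then have "q ^ nat p = 1"
    using two_step_geometric_power[of f q, OF step, of 0 "nat p"] pos[of 0] by simp
  then show False
    using power_eq_1_iff[of q "nat p"] \<open>p > 0\<close> \<open>q > 0\<close> \<open>q \<noteq> 1\<close> by simp
qed

section \<open>Affine geometry of the configuration\<close>

lemma infdist_hyperplane: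
  fixes a c :: "'a::real_inner"
  assumes "a \<noteq> 0"
  shows "infdist c {x. a \<bullet> x = b} = \<bar>a \<bullet> c - b\<bar> / norm a"
proof (rule antisym)
  define p where "p = c - ((a \<bullet> c - b) / (a \<bullet> a)) *\<^sub>R a"
  have "p \<in> {x. a \<bullet> x = b}"
    using assms by (simp add: p_def inner_diff_right)
  moreover have "dist c p = \<bar>a \<bullet> c - b\<bar> / norm a"
    using assms by (simp add: p_def dist_norm power2_norm_eq_inner[symmetric] power2_eq_square)
  ultimately show "infdist c {x. a \<bullet> x = b} \<le> \<bar>a \<bullet> c - b\<bar> / norm a"
    by (metis infdist_le)
  have "\<bar>a \<bullet> c - b\<bar> / norm a \<le> dist c y" if "a \<bullet> y = b" for y
  proof -
    have "\<bar>a \<bullet> c - b\<bar> = \<bar>a \<bullet> (c - y)\<bar>"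
      using that by (simp add: inner_diff_right)
    also have "\<dots> \<le> norm a * dist c y"
      by (simp add: dist_norm Cauchy_Schwarz_ineq2)
    finally show ?thesis
      using assms by (simp add: divide_le_eq mult.commute)
  qed
  moreover have "{x. a \<bullet> x = b} \<noteq> {}"
    using \<open>p \<in> _\<close> by blast
  ultimately show "\<bar>a \<bullet> c - b\<bar> / norm a \<le> infdist c {x. a \<bullet> x = b}"
    unfolding infdist_notempty[OF \<open>_ \<noteq> {}\<close>] by (intro cINF_greatest) auto
qed

lemma collinear_homothety:
  fixes c x :: "'a::real_vector"
  shows "collinear {c, x, c + u *\<^sub>R (x - c)}"
proof -
  have "c + u *\<^sub>R (x - c) = u *\<^sub>R x + (1 - u) *\<^sub>R c"
    by (simp add: algebra_simps)
  then have "collinear {x, c + u *\<^sub>R (x - c), c}"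
    unfolding collinear_3_expand by blast
  then show ?thesis
    by (simp add: insert_commute)
qed

locale parallel_lines_dual_conic =
  fixes a c d :: "real^2" and b1 b2 :: real
  assumes inner_a_d: "a \<bullet> d \<noteq> 0"
    and c_notin_lines: "a \<bullet> c \<noteq> b1" "a \<bullet> c \<noteq> b2"
    and unequal_distances: "\<bar>b1 - a \<bullet> c\<bar> \<noteq> \<bar>b2 - a \<bullet> c\<bar>"
begin

definition height :: "real^2 \<Rightarrow> real" where
  "height x = (a \<bullet> x - a \<bullet> c) / (a \<bullet> d)"

definition offset :: "real^2 \<Rightarrow> real^2" where
  "offset x = x - c - height x *\<^sub>R d"

definition level :: "int \<Rightarrow> real" where
  "level j = ((if even j then b1 else b2) - a \<bullet> c) / (a \<bullet> d)"

definition ratio :: "int \<Rightarrow> real" where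
  "ratio k = level (k + 1) / level k"

definition parallel_line :: "int \<Rightarrow> (real^2) set" where
  "parallel_line j = (if even j then {x. a \<bullet> x = b1} else {x. a \<bullet> x = b2})"

abbreviation central_line :: "(real^2) set" where
  "central_line \<equiv> {c + t *\<^sub>R d | t. True}"

lemma height_c [simp]: "height c = 0"
  by (simp add: height_def)

lemma height_add_scaleR_d [simp]: "height (x + r *\<^sub>R d) = height x + r"
  using inner_a_d by (simp add: height_def inner_add_right field_simps)

lemma height_homothety: "height (c + u *\<^sub>R (x - c)) = u * height x"
  by (simp add: height_def inner_add_right inner_diff_right algebra_simps)

lemma offset_decomposition: "x = c + height x *\<^sub>R d + offset x"
  by (simp add: offset_def)

lemma offset_central_line [simp]: "offset (c + r *\<^sub>R d) = 0"
  using height_add_scaleR_d[of c r] by (simp add: offset_def)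

lemma eq_if_height_offset_eq: "height x = height y \<Longrightarrow> offset x = offset y \<Longrightarrow> x = y"
  by (subst offset_decomposition[of x], subst offset_decomposition[of y]) simp

lemma offset_collinear:
  assumes "height x \<noteq> 0" "collinear {c, x, y}"
  shows "offset y = (height y / height x) *\<^sub>R offset x"
proof -
  have "x \<noteq> c"
    using assms(1) by auto
  moreover have "collinear {x, y, c}"
    using assms(2) by (simp add: insert_commute)
  ultimately obtain u where "y = u *\<^sub>R x + (1 - u) *\<^sub>R c"
    by (auto simp: collinear_3_expand)
  then have y: "y = c + u *\<^sub>R (x - c)"
    by (simp add: algebra_simps)
  then have "height y = u * height x"
    by (simp add: height_homothety)
  moreover have "offset y = u *\<^sub>R offset x"
  proof -
    have "offset y = u *\<^sub>R (x - c) - (u * height x) *\<^sub>R d"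
      using y \<open>height y = u * height x\<close> by (simp add: offset_def)
    then show ?thesis
      by (simp add: offset_def algebra_simps)
  qed
  ultimately show ?thesis
    using assms(1) by simp
qed

lemma offset_parallel: "y - x = r *\<^sub>R d \<Longrightarrow> offset y = offset x"
  by (simp add: offset_def eq_diff_eq algebra_simps)

lemma mem_parallel_line_iff: "x \<in> parallel_line j \<longleftrightarrow> height x = level j"
  using inner_a_d by (auto simp: parallel_line_def height_def level_def divide_cancel_right)

lemma central_line_inter_parallel_line: "parallel_line j \<inter> central_line = {c + level j *\<^sub>R d}"
proof -
  have "c + t *\<^sub>R d \<in> parallel_line j \<longleftrightarrow> t = level j" for t
    using mem_parallel_line_iff[of "c + t *\<^sub>R d" j] by simp
  then show ?thesis
    by auto
qed

lemma level_nonzero: "level j \<noteq> 0"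
  using inner_a_d c_notin_lines by (simp add: level_def)

lemma level_cong: "even j = even k \<Longrightarrow> level j = level k"
  by (simp add: level_def)

lemma level_pair: "{level j, level (j + 1)} = {level 0, level 1}"
proof (cases "even j")
  case True
  then have "level j = level 0" "level (j + 1) = level 1"
    by (auto intro: level_cong)
  then show ?thesis
    by simp
next
  case False
  then have "level j = level 1" "level (j + 1) = level 0"
    by (auto intro: level_cong)
  then show ?thesis
    by auto
qed

lemma ratio_nonzero: "ratio k \<noteq> 0"
  using level_nonzero by (simp add: ratio_def)

lemma abs_ratio_ne_1: "\<bar>ratio k\<bar> \<noteq> 1"
  using unequal_distances inner_a_d
  by (auto simp: ratio_def level_def abs_divide divide_eq_1_iff divide_cancel_right)

lemma ratio_ne_1: "ratio k \<noteq> 1"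
  using abs_ratio_ne_1[of k] by auto

lemma infdist_central_line_le_offset: "infdist x central_line \<le> norm (offset x)"
proof -
  have "infdist x central_line \<le> dist x (c + height x *\<^sub>R d)"
    by (rule infdist_le) blast
  also have "\<dots> = norm (offset x)"
    by (simp add: offset_def dist_norm algebra_simps)
  finally show ?thesis .
qed

lemma norm_offset_le: "norm (offset x) \<le> norm x + norm c + \<bar>height x\<bar> * norm d"
  unfolding offset_def
  by (intro order.trans[OF norm_triangle_ineq4] add_mono norm_triangle_ineq4) simp_all

lemma abs_level_le: "\<bar>level j\<bar> \<le> \<bar>level 0\<bar> + \<bar>level 1\<bar>"
  by (cases "even j") (simp_all add: level_def)

section \<open>Polylines\<close>

definition alternating :: "int set \<Rightarrow> (int \<Rightarrow> real^2) \<Rightarrow> int \<Rightarrow> int \<Rightarrow> bool" where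
  "alternating I v s t \<longleftrightarrow>
     (\<forall>i\<in>I. height (v i) = level (i + t)) \<and>
     (\<forall>i. i \<in> I \<and> i + 1 \<in> I \<longrightarrow>
        (if even (i + s) then collinear {c, v i, v (i + 1)} else (\<exists>r. v (i + 1) - v i = r *\<^sub>R d)))"

abbreviation is_polyline :: "int set \<Rightarrow> (int \<Rightarrow> real^2) \<Rightarrow> bool" where
  "is_polyline \<equiv> polyline {x. a \<bullet> x = b1} {x. a \<bullet> x = b2} c d"

abbreviation is_max_polyline :: "int set \<Rightarrow> (int \<Rightarrow> real^2) \<Rightarrow> bool" where
  "is_max_polyline \<equiv> max_polyline {x. a \<bullet> x = b1} {x. a \<bullet> x = b2} c d"

lemma polyline_iff:
  "is_polyline I v \<longleftrightarrow> int_interval I \<and> (\<exists>s t. alternating I v s t) \<and>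
     (\<forall>i. i \<in> I \<and> i + 2 \<in> I \<longrightarrow> v (i + 2) \<noteq> v i)"
  unfolding polyline_def alternating_def parallel_line_def[symmetric] mem_parallel_line_iff ..

lemma alternating_height: "alternating I v s t \<Longrightarrow> i \<in> I \<Longrightarrow> height (v i) = level (i + t)"
  by (simp add: alternating_def)

lemma alternating_offset_succ:
  assumes alt: "alternating I v s t" and "i \<in> I" "i + 1 \<in> I"
  shows "offset (v (i + 1)) = (if even (i + s) then ratio (i + t) else 1) *\<^sub>R offset (v i)"
proof -
  have side: "if even (i + s) then collinear {c, v i, v (i + 1)}
              else (\<exists>r. v (i + 1) - v i = r *\<^sub>R d)"
    using alt assms(2,3) unfolding alternating_def by blast
  show ?thesis
  proof (cases "even (i + s)")
    case True
    have "height (v i) = level (i + t)" "height (v (i + 1)) = level (i + t + 1)"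
      using alternating_height[OF alt] assms(2,3) by (simp_all add: ac_simps)
    then show ?thesis
      using True side offset_collinear[of "v i" "v (i + 1)"] level_nonzero[of "i + t"]
      by (simp add: ratio_def)
  next
    case False
    then obtain r where "v (i + 1) - v i = r *\<^sub>R d"
      using side by auto
    then show ?thesis
      using False offset_parallel by simp
  qed
qed

lemma alternating_offset_succ_eq_0_iff:
  "alternating I v s t \<Longrightarrow> i \<in> I \<Longrightarrow> i + 1 \<in> I \<Longrightarrow> offset (v (i + 1)) = 0 \<longleftrightarrow> offset (v i) = 0"
  using alternating_offset_succ[of I v s t i] ratio_nonzero by simp

lemma alternating_offset_two_step:
  assumes alt: "alternating I v s t" and "i \<in> I" "i + 1 \<in> I" "i + 2 \<in> I"
  shows "offset (v (i + 2)) = ratio (s + t) *\<^sub>R offset (v i)"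
proof -
  have "(if even (i + 1 + s) then ratio (i + 1 + t) else 1) *
        (if even (i + s) then ratio (i + t) else 1) = ratio (s + t)"
    by (cases "even i"; cases "even s"; cases "even t") (simp_all add: ratio_def level_def)
  moreover have "i + 2 = (i + 1) + 1"
    by simp
  ultimately show ?thesis
    using alternating_offset_succ[OF alt assms(2,3)] alternating_offset_succ[OF alt assms(3)]
      assms(4)
    by (simp only:) simp
qed

lemma alternating_no_backtrack:
  assumes alt: "alternating I v s t" and "i \<in> I" "i + 1 \<in> I" "i + 2 \<in> I"
    and "offset (v (i + 1)) \<noteq> 0"
  shows "v (i + 2) \<noteq> v i"
proof
  assume "v (i + 2) = v i"
  then have "offset (v i) = ratio (s + t) *\<^sub>R offset (v i)"
    using alternating_offset_two_step[OF alt assms(2-4)] by simp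
  moreover have "offset (v i) \<noteq> 0"
    using assms(5) alternating_offset_succ_eq_0_iff[OF alt assms(2,3)] by simp
  ultimately show False
    using ratio_ne_1[of "s + t"] by (metis scaleR_cancel_right scaleR_one)
qed

lemma polyline_offset_nonzero:
  assumes "is_polyline I v" "i \<in> I" "i + 2 \<in> I" "j \<in> {i..i + 2}"
  shows "offset (v j) \<noteq> 0"
proof -
  obtain s t where alt: "alternating I v s t" and "int_interval I"
    and no_backtrack: "v (i + 2) \<noteq> v i"
    using assms(1-3) by (auto simp: polyline_iff)
  have "i + 1 \<in> I"
    using int_interval_betweenD[OF \<open>int_interval I\<close> assms(2,3)] by simp
  have two_step: "offset (v (i + 2)) = ratio (s + t) *\<^sub>R offset (v i)"
    using alternating_offset_two_step[OF alt assms(2) \<open>i + 1 \<in> I\<close> assms(3)] .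
  have "height (v (i + 2)) = height (v i)"
    using alternating_height[OF alt] assms(2,3) level_cong[of "i + 2 + t" "i + t"] by simp
  then have "offset (v i) \<noteq> 0"
    using no_backtrack two_step eq_if_height_offset_eq[of "v (i + 2)" "v i"] by auto
  moreover have "offset (v (i + 1)) \<noteq> 0"
    using calculation alternating_offset_succ_eq_0_iff[OF alt assms(2) \<open>i + 1 \<in> I\<close>] by simp
  moreover have "offset (v (i + 2)) \<noteq> 0"
    using calculation(1) two_step ratio_nonzero by simp
  moreover have "j = i \<or> j = i + 1 \<or> j = i + 2"
    using assms(4) by auto
  ultimately show ?thesis
    by auto
qed

lemma exists_next_vertex:
  assumes "height x \<noteq> 0"
  shows "\<exists>y. height y = h \<and> (if b then collinear {c, x, y} else (\<exists>r. y - x = r *\<^sub>R d))"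
proof (cases b)
  case True
  let ?y = "c + (h / height x) *\<^sub>R (x - c)"
  have "height ?y = h"
    using assms by (simp add: height_homothety)
  then show ?thesis
    using True collinear_homothety[of c x "h / height x"] by (intro exI[of _ ?y]) simp
next
  case False
  let ?y = "x + (h - height x) *\<^sub>R d"
  have "height ?y = h"
    by simp
  then show ?thesis
    using False by (intro exI[of _ ?y]) simp
qed

lemma alternating_extend:
  assumes alt: "alternating I v s t" and "hi \<in> I" and le_hi: "\<forall>i\<in>I. i \<le> hi"
  shows "\<exists>y. alternating (insert (hi + 1) I) (v(hi + 1 := y)) s t"
proof -
  have "height (v hi) \<noteq> 0"
    using alternating_height[OF alt \<open>hi \<in> I\<close>] level_nonzero by simp
  then obtain y where y: "height y = level (hi + 1 + t)"
    and side: "if even (hi + s) then collinear {c, v hi, y} else (\<exists>r. y - v hi = r *\<^sub>R d)"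
    using exists_next_vertex[of "v hi" "level (hi + 1 + t)" "even (hi + s)"] by blast
  have "hi + 1 \<notin> I"
    using le_hi by force
  have "alternating (insert (hi + 1) I) (v(hi + 1 := y)) s t"
    unfolding alternating_def
  proof (intro conjI ballI allI impI)
    fix i assume "i \<in> insert (hi + 1) I"
    then show "height ((v(hi + 1 := y)) i) = level (i + t)"
      using y alternating_height[OF alt] \<open>hi + 1 \<notin> I\<close> by auto
  next
    fix i assume i: "i \<in> insert (hi + 1) I \<and> i + 1 \<in> insert (hi + 1) I"
    have "i \<noteq> hi + 1"
      using i le_hi by force
    show "if even (i + s) then collinear {c, (v(hi + 1 := y)) i, (v(hi + 1 := y)) (i + 1)}
          else \<exists>r. (v(hi + 1 := y)) (i + 1) - (v(hi + 1 := y)) i = r *\<^sub>R d"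
    proof (cases "i = hi")
      case True
      then show ?thesis
        using side \<open>hi + 1 \<notin> I\<close> \<open>hi \<in> I\<close> by auto
    next
      case False
      then have "i \<in> I" "i + 1 \<in> I"
        using i \<open>i \<noteq> hi + 1\<close> by auto
      then show ?thesis
        using alt \<open>hi + 1 \<notin> I\<close> by (auto simp: alternating_def)
    qed
  qed
  then show ?thesis ..
qed

lemma polyline_extend:
  assumes poly: "is_polyline I v" and "hi \<in> I" "hi + 1 \<notin> I"
    and end_off_central_line: "hi - 1 \<in> I \<Longrightarrow> offset (v hi) \<noteq> 0"
  shows "\<exists>w. is_polyline (insert (hi + 1) I) w \<and> (\<forall>i\<in>I. w i = v i)"
proof -
  obtain s t where alt: "alternating I v s t" and "int_interval I"
    and no_backtrack: "\<forall>i. i \<in> I \<and> i + 2 \<in> I \<longrightarrow> v (i + 2) \<noteq> v i"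
    using poly by (auto simp: polyline_iff)
  have le_hi: "\<forall>i\<in>I. i \<le> hi"
    using int_interval_le_last[OF \<open>int_interval I\<close> \<open>hi \<in> I\<close> \<open>hi + 1 \<notin> I\<close>] by blast
  obtain y where alt': "alternating (insert (hi + 1) I) (v(hi + 1 := y)) s t"
    using alternating_extend[OF alt \<open>hi \<in> I\<close> le_hi] by blast
  define w where "w = v(hi + 1 := y)"
  have w_I: "w i = v i" if "i \<in> I" for i
    using that \<open>hi + 1 \<notin> I\<close> by (auto simp: w_def)
  have "w (i + 2) \<noteq> w i" if i: "i \<in> insert (hi + 1) I" "i + 2 \<in> insert (hi + 1) I" for i
  proof (cases "i + 2 = hi + 1")
    case True
    then have "i = hi - 1" "i + 1 = hi"
      by simp_all
    then have "hi - 1 \<in> I" "i + 1 \<in> insert (hi + 1) I"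
      using i(1) \<open>hi \<in> I\<close> by auto
    then have "offset (w hi) \<noteq> 0"
      using end_off_central_line w_I \<open>hi \<in> I\<close> by simp
    then show ?thesis
      using alternating_no_backtrack[OF alt'[folded w_def] i(1) \<open>i + 1 \<in> _\<close> i(2)] \<open>i + 1 = hi\<close>
      by simp
  next
    case False
    have "i \<noteq> hi + 1"
      using i(2) le_hi by force
    then show ?thesis
      using False i no_backtrack w_I by simp
  qed
  then have "is_polyline (insert (hi + 1) I) w"
    using alt' int_interval_insert_succ[OF \<open>int_interval I\<close> \<open>hi \<in> I\<close> \<open>hi + 1 \<notin> I\<close>]
    unfolding polyline_iff w_def by blast
  then show ?thesis
    using w_I by blast
qed

lemma alternating_reflect:
  assumes alt: "alternating I v s t"
  shows "alternating (uminus -` I) (\<lambda>i. v (- i)) (s + 1) t"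
  unfolding alternating_def
proof (intro conjI ballI allI impI)
  fix i assume "i \<in> uminus -` I"
  moreover have "level (- i + t) = level (i + t)"
    by (rule level_cong) presburger
  ultimately show "height (v (- i)) = level (i + t)"
    using alternating_height[OF alt, of "- i"] by simp
next
  fix i assume i: "i \<in> uminus -` I \<and> i + 1 \<in> uminus -` I"
  define j where "j = - i - 1"
  have "j \<in> I" "j + 1 \<in> I" "v j = v (- (i + 1))" "v (j + 1) = v (- i)"
    using i by (simp_all add: j_def)
  then have side: "if even (j + s) then collinear {c, v (- (i + 1)), v (- i)}
                   else (\<exists>r. v (- i) - v (- (i + 1)) = r *\<^sub>R d)"
    using alt unfolding alternating_def by metis
  have parity: "even (j + s) \<longleftrightarrow> even (i + (s + 1))"
    unfolding j_def by presburger
  show "if even (i + (s + 1)) then collinear {c, v (- i), v (- (i + 1))}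
        else (\<exists>r. v (- (i + 1)) - v (- i) = r *\<^sub>R d)"
  proof (cases "even (i + (s + 1))")
    case True
    then show ?thesis
      using side parity by (simp add: insert_commute)
  next
    case False
    then obtain r where "v (- i) - v (- (i + 1)) = r *\<^sub>R d"
      using side parity by auto
    then have "v (- (i + 1)) - v (- i) = (- r) *\<^sub>R d"
      by (simp add: algebra_simps)
    then show ?thesis
      unfolding if_not_P[OF False] by (rule exI)
  qed
qed

lemma polyline_reflect:
  assumes "is_polyline I v"
  shows "is_polyline (uminus -` I) (\<lambda>i. v (- i))"
proof -
  obtain s t where "alternating I v s t" "int_interval I"
    and no_backtrack: "\<forall>i. i \<in> I \<and> i + 2 \<in> I \<longrightarrow> v (i + 2) \<noteq> v i"
    using assms by (auto simp: polyline_iff)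
  have "v (- (i + 2)) \<noteq> v (- i)" if "- i \<in> I" "- (i + 2) \<in> I" for i
    using no_backtrack[rule_format, of "- (i + 2)"] that by simp
  then show ?thesis
    using alternating_reflect[OF \<open>alternating I v s t\<close>] int_interval_reflect[OF \<open>int_interval I\<close>]
    unfolding polyline_iff by auto
qed

lemma polyline_norm_offset_le:
  assumes "is_polyline I v" "i \<in> I"
  shows "norm (offset (v i)) \<le> norm (v i) + norm c + (\<bar>level 0\<bar> + \<bar>level 1\<bar>) * norm d"
proof -
  obtain s t where "alternating I v s t"
    using assms(1) by (auto simp: polyline_iff)
  then have "\<bar>height (v i)\<bar> * norm d \<le> (\<bar>level 0\<bar> + \<bar>level 1\<bar>) * norm d"
    using alternating_height assms(2) abs_level_le by (simp add: mult_right_mono)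
  then show ?thesis
    using norm_offset_le[of "v i"] by simp
qed

lemma polyline_UNIV_offset_geometric:
  assumes "is_polyline UNIV v"
  shows "\<exists>q. q \<noteq> 1 \<and> (\<forall>i. norm (offset (v i)) > 0) \<and>
    (\<forall>i. norm (offset (v (i + 2))) = q * norm (offset (v i)))"
proof -
  obtain s t where alt: "alternating UNIV v s t"
    using assms by (auto simp: polyline_iff)
  have "\<forall>i. norm (offset (v i)) > 0"
    using polyline_offset_nonzero[OF assms UNIV_I UNIV_I, of i i for i] by simp
  moreover have "\<forall>i. norm (offset (v (i + 2))) = \<bar>ratio (s + t)\<bar> * norm (offset (v i))"
    using alternating_offset_two_step[OF alt] by simp
  ultimately show ?thesis
    using abs_ratio_ne_1 by blast
qed

lemma polyline_indices_if_vertex_on_central_line: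
  assumes poly: "is_polyline J w" and "i \<in> J" "i + 1 \<in> J" "offset (w i) = 0"
  shows "J = {i, i + 1}"
proof (intro equalityI subsetI)
  fix j assume "j \<in> J"
  have "int_interval J"
    using poly by (simp add: polyline_iff)
  have "i + 2 \<notin> J"
    using polyline_offset_nonzero[OF poly \<open>i \<in> J\<close>, of i] \<open>offset (w i) = 0\<close> by auto
  moreover have "i - 1 \<notin> J"
  proof
    assume "i - 1 \<in> J"
    moreover have "i - 1 + 2 \<in> J"
      using \<open>i + 1 \<in> J\<close> by (simp add: add.commute)
    ultimately show False
      using polyline_offset_nonzero[OF poly, of "i - 1" i] \<open>offset (w i) = 0\<close> by simp
  qed
  ultimately have "\<not> j \<ge> i + 2" "\<not> j \<le> i - 1"
    using int_interval_betweenD[OF \<open>int_interval J\<close> \<open>i \<in> J\<close> \<open>j \<in> J\<close>, of "i + 2"]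
      int_interval_betweenD[OF \<open>int_interval J\<close> \<open>j \<in> J\<close> \<open>i \<in> J\<close>, of "i - 1"]
    by auto
  then show "j \<in> {i, i + 1}"
    by auto
qed (use assms in auto)

section \<open>Maximal polylines\<close>

lemma max_polyline_last:
  assumes max: "is_max_polyline I v" and "hi \<in> I" "hi + 1 \<notin> I"
  shows "hi - 1 \<in> I \<and> offset (v hi) = 0"
proof (rule ccontr)
  assume "\<not> ?thesis"
  then obtain w where "is_polyline (insert (hi + 1) I) w" "\<forall>i\<in>I. w i = v i"
    using polyline_extend[of I v hi] max \<open>hi \<in> I\<close> \<open>hi + 1 \<notin> I\<close> by (auto simp: max_polyline_def)
  moreover have "I \<subset> insert (hi + 1) I"
    using \<open>hi + 1 \<notin> I\<close> by blast
  ultimately show False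
    using max unfolding max_polyline_def by blast
qed

lemma max_polyline_reflect:
  assumes max: "is_max_polyline I v"
  shows "is_max_polyline (uminus -` I) (\<lambda>i. v (- i))"
  unfolding max_polyline_def
proof (intro conjI notI)
  show "is_polyline (uminus -` I) (\<lambda>i. v (- i))"
    using max polyline_reflect by (simp add: max_polyline_def)
next
  assume "\<exists>J w. is_polyline J w \<and> uminus -` I \<subset> J \<and> (\<forall>i\<in>uminus -` I. w i = v (- i))"
  then obtain J w where J: "is_polyline J w" "uminus -` I \<subset> J" "\<forall>i\<in>uminus -` I. w i = v (- i)"
    by blast
  have "I \<subseteq> uminus -` J"
  proof
    fix i assume "i \<in> I"
    then have "- i \<in> uminus -` I"
      by simp
    then have "- i \<in> J"
      using J(2) by blast
    then show "i \<in> uminus -` J"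
      by simp
  qed
  moreover obtain j where "j \<in> J" "- j \<notin> I"
    using J(2) by auto
  ultimately have "I \<subset> uminus -` J"
    by auto
  moreover have "\<forall>i\<in>I. w (- i) = v i"
    using J(3) by simp
  ultimately show False
    using max polyline_reflect[OF J(1)] unfolding max_polyline_def by blast
qed

lemma max_polyline_infinite_succ:
  assumes max: "is_max_polyline I v" and "infinite I" and "i \<in> I"
  shows "i + 1 \<in> I"
proof (rule ccontr)
  assume "i + 1 \<notin> I"
  have poly: "is_polyline I v" and "int_interval I"
    using max by (simp_all add: max_polyline_def polyline_iff)
  have "\<not> I \<subseteq> {i - 1..i}"
    using \<open>infinite I\<close> finite_subset by blast
  then obtain j where "j \<in> I" "j < i - 1"
    using int_interval_le_last[OF \<open>int_interval I\<close> \<open>i \<in> I\<close> \<open>i + 1 \<notin> I\<close>] by fastforce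
  then have "i - 2 \<in> I"
    using int_interval_betweenD[OF \<open>int_interval I\<close> \<open>j \<in> I\<close> \<open>i \<in> I\<close>] by simp
  then have "offset (v i) \<noteq> 0"
    using polyline_offset_nonzero[OF poly, of "i - 2" i] \<open>i \<in> I\<close> by simp
  then show False
    using max_polyline_last[OF max \<open>i \<in> I\<close> \<open>i + 1 \<notin> I\<close>] by simp
qed

lemma max_polyline_infinite_eq_UNIV:
  assumes max: "is_max_polyline I v" and "infinite I"
  shows "I = UNIV"
proof -
  have "infinite (uminus -` I)"
    using \<open>infinite I\<close> finite_vimageD[of uminus I] by auto
  then have pred: "i - 1 \<in> I" if "i \<in> I" for i
    using max_polyline_infinite_succ[OF max_polyline_reflect[OF max], of "- i"] that by simp
  obtain i0 where "i0 \<in> I"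
    using \<open>infinite I\<close> by (metis finite.emptyI ex_in_conv)
  have "i \<in> I" for i
    by (induction i rule: int_induct[of _ i0])
      (use \<open>i0 \<in> I\<close> max_polyline_infinite_succ[OF max \<open>infinite I\<close>] pred in auto)
  then show ?thesis
    by blast
qed

lemma max_polyline_finite:
  assumes max: "is_max_polyline I v" and "finite I"
  shows "card I = 2 \<and> v ` I = {c + level 0 *\<^sub>R d, c + level 1 *\<^sub>R d}"
proof -
  have poly: "is_polyline I v"
    using max by (simp add: max_polyline_def)
  then obtain s t where alt: "alternating I v s t" and "int_interval I"
    by (auto simp: polyline_iff)
  define hi where "hi = Max I"
  have "I \<noteq> {}"
    using \<open>int_interval I\<close> by (simp add: int_interval_def)
  then have "hi \<in> I" "hi + 1 \<notin> I"
    using \<open>finite I\<close> Max_ge[OF \<open>finite I\<close>, of "hi + 1"] by (auto simp: hi_def)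
  then have "hi - 1 \<in> I" and "offset (v hi) = 0"
    using max_polyline_last[OF max] by simp_all
  then have "offset (v (hi - 1)) = 0"
    using alternating_offset_succ_eq_0_iff[OF alt, of "hi - 1"] \<open>hi \<in> I\<close> by simp
  then have I: "I = {hi - 1, hi}"
    using polyline_indices_if_vertex_on_central_line[OF poly \<open>hi - 1 \<in> I\<close>] \<open>hi \<in> I\<close> by simp
  have "v j = c + level (j + t) *\<^sub>R d" if "j \<in> I" for j
    using that offset_decomposition[of "v j"] alternating_height[OF alt that]
      \<open>offset (v hi) = 0\<close> \<open>offset (v (hi - 1)) = 0\<close> I
    by auto
  then show ?thesis
    using level_pair[of "hi - 1 + t"] unfolding I by auto
qed

lemma max_polyline_segment: "is_max_polyline {0, 1} (\<lambda>i. c + level i *\<^sub>R d)"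
proof -
  let ?v = "\<lambda>i. c + level i *\<^sub>R d"
  have "c + (level 1 / level 0) *\<^sub>R (?v 0 - c) = ?v 1"
    using level_nonzero[of 0] by simp
  then have "collinear {c, ?v 0, ?v 1}"
    using collinear_homothety[of c "?v 0" "level 1 / level 0"] by (simp only:)
  then have "alternating {0, 1} ?v 0 0"
    by (auto simp: alternating_def)
  then have "is_polyline {0, 1} ?v"
    unfolding polyline_iff by (auto simp: int_interval_def)
  moreover have "J = {0, 1}" if "is_polyline J w" "{0, 1} \<subseteq> J" "w 0 = ?v 0" for J w
    using polyline_indices_if_vertex_on_central_line[OF that(1), of 0] that(2,3) by simp
  ultimately show ?thesis
    unfolding max_polyline_def by blast
qed

lemma max_polyline_infinite:
  assumes max: "is_max_polyline I v" and "infinite I"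
  shows "I = UNIV \<and> \<not> (\<exists>p>0. \<forall>i. v (i + p) = v i) \<and>
    (((\<lambda>n. infdist (v (int n)) central_line) \<longlonglongrightarrow> 0 \<and>
      filterlim (\<lambda>n. norm (v (- int n))) at_top sequentially) \<or>
     ((\<lambda>n. infdist (v (- int n)) central_line) \<longlonglongrightarrow> 0 \<and>
      filterlim (\<lambda>n. norm (v (int n))) at_top sequentially))"
proof -
  have "I = UNIV"
    using max_polyline_infinite_eq_UNIV[OF assms] .
  then have poly: "is_polyline UNIV v"
    using max by (simp add: max_polyline_def)
  define f where "f i = norm (offset (v i))" for i
  obtain q where geometric: "\<And>i. f i > 0" "\<And>i. f (i + 2) = q * f i" "q \<noteq> 1"
    using polyline_UNIV_offset_geometric[OF poly] unfolding f_def by blast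
  have "\<not> (\<exists>p>0. \<forall>i. v (i + p) = v i)"
  proof
    assume "\<exists>p>0. \<forall>i. v (i + p) = v i"
    then have "\<exists>p>0. \<forall>i. f (i + p) = f i"
      by (auto simp: f_def)
    then show False
      using two_step_geometric_not_periodic[of f, OF geometric] by blast
  qed
  moreover have to_central_line: "(\<lambda>n. infdist (v (g n)) central_line) \<longlonglongrightarrow> 0"
    if "(\<lambda>n. f (g n)) \<longlonglongrightarrow> 0" for g :: "nat \<Rightarrow> int"
    using infdist_central_line_le_offset
    by (intro Lim_null_comparison[OF always_eventually that]) (simp add: f_def infdist_nonneg)
  moreover have to_infinity: "filterlim (\<lambda>n. norm (v (g n))) at_top sequentially"
    if "filterlim (\<lambda>n. f (g n)) at_top sequentially" for g :: "nat \<Rightarrow> int"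
  proof -
    define K where "K = norm c + (\<bar>level 0\<bar> + \<bar>level 1\<bar>) * norm d"
    have "- K + f i \<le> norm (v i)" for i
      using polyline_norm_offset_le[OF poly UNIV_I, of i] by (simp add: f_def K_def)
    then have "eventually (\<lambda>n. - K + f (g n) \<le> norm (v (g n))) sequentially"
      by (intro always_eventually allI)
    then show ?thesis
      by (rule filterlim_at_top_mono[OF filterlim_tendsto_add_at_top[OF tendsto_const that]])
  qed
  ultimately show ?thesis
    using two_step_geometric_dichotomy[of f, OF geometric] \<open>I = UNIV\<close>
      to_central_line[of int] to_central_line[of "\<lambda>n. - int n"]
      to_infinity[of int] to_infinity[of "\<lambda>n. - int n"]
    by blast
qed

end

theorem lemma3p14:
  fixes a c d :: "real^2" and b1 b2 :: real
  defines "g1 \<equiv> {x. a \<bullet> x = b1}"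
      and "g2 \<equiv> {x. a \<bullet> x = b2}"
      and "L \<equiv> {c + t *\<^sub>R d | t. True}"
  assumes "a \<noteq> 0" and "b1 \<noteq> b2" and "d \<noteq> 0" and "a \<bullet> d \<noteq> 0"
      and "c \<notin> g1" and "c \<notin> g2"
      and "infdist c g1 \<noteq> infdist c g2"
  shows "(\<exists>I v. max_polyline g1 g2 c d I v \<and> finite I)
       \<and> (\<forall>I v. max_polyline g1 g2 c d I v \<and> finite I \<longrightarrow>
              card I = 2 \<and> v ` I = (g1 \<inter> L) \<union> (g2 \<inter> L))
       \<and> (\<forall>I v. max_polyline g1 g2 c d I v \<and> infinite I \<longrightarrow>
              I = UNIV \<and>
              \<not> (\<exists>p>0. \<forall>i. v (i + p) = v i) \<and>
              (((\<lambda>n. infdist (v (int n)) L) \<longlonglongrightarrow> 0 \<and>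
                filterlim (\<lambda>n. norm (v (- int n))) at_top sequentially) \<or>
               ((\<lambda>n. infdist (v (- int n)) L) \<longlonglongrightarrow> 0 \<and>
                filterlim (\<lambda>n. norm (v (int n))) at_top sequentially)))"
proof -
  have "\<bar>b1 - a \<bullet> c\<bar> \<noteq> \<bar>b2 - a \<bullet> c\<bar>"
    using assms(10) infdist_hyperplane[OF assms(4), of c]
    by (auto simp: g1_def g2_def abs_minus_commute)
  then interpret parallel_lines_dual_conic a c d b1 b2
    using assms(7-9) by unfold_locales (auto simp: g1_def g2_def)
  have "g1 \<inter> L = {c + level 0 *\<^sub>R d}" "g2 \<inter> L = {c + level 1 *\<^sub>R d}"
    using central_line_inter_parallel_line[of 0] central_line_inter_parallel_line[of 1]
    by (simp_all add: parallel_line_def g1_def g2_def L_def)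
  then show ?thesis
    using max_polyline_segment max_polyline_finite max_polyline_infinite
    unfolding g1_def g2_def L_def by blast
qed

end
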